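(* Let $P$ be a poset with least element $0$. Then the metric dimension $\dim_M(G(P))$ of the zero-divisor graph $G(P)$ is finite if and only if $G(P)$ is a finite graph.
   Context: For a poset $P$ with $0$ and $A\subseteq P$, $A^{\ell}=\{b\in P: b\le a \text{ for all } a\in A\}$. An element $a\in P$ is a zero-divisor if there is $b\in P\setminus\{0\}$ with $\{a,b\}^{\ell}=\{0\}$; $Z(P)$ is the set of zero-divisors and $Z^*(P)=Z(P)\setminus\{0\}$. The zero-divisor graph $G(P)$ is the simple graph with vertex set $Z^*(P)$ in which distinct $a,b$ are adjacent iff $\{a,b\}^{\ell}=\{0\}$. (It is known that $G(P)$ is connected of diameter at most $3$.) For a connected graph $G$ and an ordered set $S=\{v_1,\dots,v_k\}\subseteq V(G)$, the representation of $v$ is $D(v|S)=(d(v,v_1),\dots,d(v,v_k))$; $S$ is a resolving set if $D(u|S)=D(v|S)$ for $u,v\in V(G)\setminus S$ implies $u=v$. The metric dimension $\dim_M(G)$ is the minimum cardinality of a resolving set. *)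

theory Defs
  imports Main "HOL-Library.Extended_Nat"
begin

definition lower_cone :: "'a::order set \<Rightarrow> 'a set" where
  "lower_cone A = {b. \<forall>a\<in>A. b \<le> a}"

definition zero_divisor :: "'a::order_bot \<Rightarrow> bool" where
  "zero_divisor a \<longleftrightarrow> (\<exists>b. b \<noteq> bot \<and> lower_cone {a, b} = {bot})"

definition Zstar :: "'a::order_bot set" where
  "Zstar = {a. zero_divisor a \<and> a \<noteq> bot}"

definition zd_adj :: "'a::order_bot \<Rightarrow> 'a \<Rightarrow> bool" where
  "zd_adj a b \<longleftrightarrow> a \<in> Zstar \<and> b \<in> Zstar \<and> a \<noteq> b \<and> lower_cone {a, b} = {bot}"

text \<open>Graph given by vertex set V and adjacency relation E (edges lie within V).
  Distance = length of a shortest walk; infinity if none.\<close>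

definition gdist :: "('a \<Rightarrow> 'a \<Rightarrow> bool) \<Rightarrow> 'a \<Rightarrow> 'a \<Rightarrow> enat" where
  "gdist E u v = Inf {enat n | n. (u, v) \<in> {(x, y). E x y} ^^ n}"

definition resolving :: "'a set \<Rightarrow> ('a \<Rightarrow> 'a \<Rightarrow> bool) \<Rightarrow> 'a set \<Rightarrow> bool" where
  "resolving V E S \<longleftrightarrow> S \<subseteq> V \<and>
     (\<forall>u\<in>V - S. \<forall>v\<in>V - S. (\<forall>s\<in>S. gdist E u s = gdist E v s) \<longrightarrow> u = v)"

definition metric_dim :: "'a set \<Rightarrow> ('a \<Rightarrow> 'a \<Rightarrow> bool) \<Rightarrow> enat" where
  "metric_dim V E = Inf {(if finite S then enat (card S) else \<infinity>) | S. resolving V E S}"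

end

theory Submission
  imports Defs "HOL-Library.FuncSet"
begin

text \<open>Every nonzero zero-divisor has a partner with which it meets only in 0, and two partners either
  meet only in 0 themselves or share a nonzero lower bound; in both cases this gives a walk of length at
  most 3, so the zero-divisor graph has diameter at most 3. In a graph of bounded diameter a finite
  resolving set \<open>S\<close> labels the vertices outside \<open>S\<close> injectively by vectors in the finite set
  \<open>S \<rightarrow> {0..3}\<close>, so the vertex set is finite; conversely a finite vertex set resolves itself.\<close>

lemma gdist_le_relpow:
  assumes "(u, v) \<in> {(x, y). E x y} ^^ n"
  shows "gdist E u v \<le> enat n"
  unfolding gdist_def using assms by (auto intro!: Inf_lower)

lemma resolving_self: "resolving V E V"
  unfolding resolving_def by auto

lemma metric_dim_le_card:
  assumes "finite V"
  shows "metric_dim V E \<le> enat (card V)"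
  unfolding metric_dim_def using assms resolving_self by (force intro!: Inf_lower)

lemma finite_resolving_set_if_metric_dim_finite:
  assumes "metric_dim V E \<noteq> \<infinity>"
  obtains S where "resolving V E S" "finite S"
proof -
  from assms have "\<exists>d\<in>{(if finite S then enat (card S) else \<infinity>) | S. resolving V E S}. d \<noteq> \<infinity>"
    unfolding metric_dim_def by (metis (no_types, lifting) Inf_top_conv(1) top_enat_def)
  then show thesis using that by (auto split: if_splits)
qed

lemma finite_if_resolving_bounded_dist:
  assumes S: "resolving V E S" "finite S"
    and bounded: "\<And>u v. u \<in> V \<Longrightarrow> v \<in> V \<Longrightarrow> gdist E u v \<le> enat k"
  shows "finite V"
proof -
  define label where "label u = restrict (gdist E u) S" for u
  have "inj_on label (V - S)"
  proof (rule inj_onI)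
    fix u v assume "u \<in> V - S" "v \<in> V - S" "label u = label v"
    moreover from \<open>label u = label v\<close> have "\<forall>s\<in>S. gdist E u s = gdist E v s"
      unfolding label_def by (metis restrict_apply')
    ultimately show "u = v" using S(1) unfolding resolving_def by blast
  qed
  moreover have "label ` (V - S) \<subseteq> (\<Pi>\<^sub>E s\<in>S. {d. d \<le> enat k})"
    using S(1) bounded unfolding resolving_def label_def by auto
  moreover have "finite (\<Pi>\<^sub>E s\<in>S. {d. d \<le> enat k})"
    using S(2) by (intro finite_PiE) (auto intro: finite_enat_bounded)
  ultimately have "finite (V - S)"
    by (metis finite_imageD finite_subset)
  then show "finite V"
    using S unfolding resolving_def by (metis Diff_partition finite_UnI)
qed

theorem metric_dim_finite_iff_finite_if_bounded_diameter:
  assumes "\<And>u v. u \<in> V \<Longrightarrow> v \<in> V \<Longrightarrow> gdist E u v \<le> enat k"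
  shows "metric_dim V E \<noteq> \<infinity> \<longleftrightarrow> finite V"
proof
  assume "metric_dim V E \<noteq> \<infinity>"
  then obtain S where "resolving V E S" "finite S"
    by (rule finite_resolving_set_if_metric_dim_finite)
  then show "finite V" using assms by (rule finite_if_resolving_bounded_dist)
next
  assume "finite V"
  then show "metric_dim V E \<noteq> \<infinity>"
    using metric_dim_le_card[of V E] by (auto dest: enat_ile)
qed

lemma lower_cone_pair_eq_bot_iff:
  "lower_cone {a, b} = {bot} \<longleftrightarrow> (\<forall>z. z \<le> a \<and> z \<le> b \<longrightarrow> z = (bot::'a::order_bot))"
  unfolding lower_cone_def by auto

lemma zd_adjI:
  fixes a b :: "'a::order_bot"
  assumes "a \<noteq> bot" "b \<noteq> bot" "\<And>z. z \<le> a \<Longrightarrow> z \<le> b \<Longrightarrow> z = bot"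
  shows "zd_adj a b"
proof -
  have ab: "lower_cone {a, b} = {bot}" and ba: "lower_cone {b, a} = {bot}"
    using assms(3) by (auto simp: lower_cone_pair_eq_bot_iff)
  have "a \<noteq> b" using assms by auto
  moreover have "a \<in> Zstar" "b \<in> Zstar"
    using assms ab ba unfolding Zstar_def zero_divisor_def by blast+
  ultimately show ?thesis using ab unfolding zd_adj_def by blast
qed

lemma Zstar_obtain_partner:
  fixes a :: "'a::order_bot"
  assumes "a \<in> Zstar"
  obtains x where "x \<noteq> bot" "\<And>z. z \<le> a \<Longrightarrow> z \<le> x \<Longrightarrow> z = bot"
proof -
  from assms obtain x where "x \<noteq> bot" "lower_cone {a, x} = {bot}"
    unfolding Zstar_def zero_divisor_def by blast
  then show thesis using that by (auto simp: lower_cone_pair_eq_bot_iff)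
qed

lemma gdist_zd_adj_le_3:
  fixes a b :: "'a::order_bot"
  assumes a: "a \<in> Zstar" and b: "b \<in> Zstar"
  shows "gdist zd_adj a b \<le> enat 3"
proof -
  let ?R = "{(x, y). zd_adj x y}"
  have "a \<noteq> bot" "b \<noteq> bot" using a b unfolding Zstar_def by auto
  obtain x where x: "x \<noteq> bot" "\<And>z. z \<le> a \<Longrightarrow> z \<le> x \<Longrightarrow> z = bot"
    using Zstar_obtain_partner[OF a] by blast
  obtain y where y: "y \<noteq> bot" "\<And>z. z \<le> b \<Longrightarrow> z \<le> y \<Longrightarrow> z = bot"
    using Zstar_obtain_partner[OF b] by blast
  have "(a, x) \<in> ?R" "(y, b) \<in> ?R"
    using zd_adjI[OF \<open>a \<noteq> bot\<close> x(1)] zd_adjI[OF y(1) \<open>b \<noteq> bot\<close>] x(2) y(2) by auto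
  show ?thesis
  proof (cases "\<forall>z. z \<le> x \<and> z \<le> y \<longrightarrow> z = bot")
    case True
    then have "(x, y) \<in> ?R" using zd_adjI[OF x(1) y(1)] by auto
    with \<open>(a, x) \<in> ?R\<close> \<open>(y, b) \<in> ?R\<close> have "(a, b) \<in> ?R ^^ 3"
      unfolding numeral_3_eq_3 by (blast intro: relpow_Suc_I relpow_0_I)
    then show ?thesis by (rule gdist_le_relpow)
  next
    case False
    then obtain z where z: "z \<le> x" "z \<le> y" "z \<noteq> bot" by blast
    have "(a, z) \<in> ?R" "(z, b) \<in> ?R"
      using zd_adjI[OF \<open>a \<noteq> bot\<close> z(3)] zd_adjI[OF z(3) \<open>b \<noteq> bot\<close>] x(2) y(2) z order_trans
      by blast+
    then have "(a, b) \<in> ?R ^^ 2" unfolding numeral_2_eq_2 by (blast intro: relpow_Suc_I relpow_0_I)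
    then have "gdist zd_adj a b \<le> enat 2" by (rule gdist_le_relpow)
    also have "\<dots> \<le> enat 3" by simp
    finally show ?thesis .
  qed
qed

theorem mainTheorem1:
  shows "metric_dim (Zstar :: 'a::order_bot set) zd_adj \<noteq> \<infinity> \<longleftrightarrow> finite (Zstar :: 'a set)"
  using gdist_zd_adj_le_3 by (rule metric_dim_finite_iff_finite_if_bounded_diameter)

end
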